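(* For $N\ge1$ let $\mathbf{m}=N(1,0,\dots,0)^\top\in\mathbb{R}^{N+1}$, $\mathbf{M}=\mathrm{diag}(\mathbf{m})$, and let $\mathbf{Q}_N$ be the tridiagonal matrix with $(\mathbf{Q}_N)_{kk}=-N$, $(\mathbf{Q}_N)_{k+1,k}=N-k$, $(\mathbf{Q}_N)_{k-1,k}=k$ (indices $0,\dots,N$) and zeros elsewhere. For $\mu>0$ let $\mathbf{p}^{(N)}(\mu)=(p_0,\dots,p_N)$ be the positive vector with $\sum_i p_i=1$ satisfying $(\mathbf{M}+\mu\mathbf{Q}_N)\mathbf{p}=\overline{m}\,\mathbf{p}$, $\overline{m}=\mathbf{m}\cdot\mathbf{p}$, and let $\overline{r}=\overline{m}/N=p_0$. Then: (i) if $0<\mu<1$, then $\lim_{N\to\infty}p_0=\lim_{N\to\infty}\overline{r}=1-\mu$, and for each fixed integer $a\ge1$, $\lim_{N\to\infty}p_a=(1-\mu)\mu^a$; (ii) if $\mu\ge1$, then $\lim_{N\to\infty}\overline{r}=\lim_{N\to\infty}p_0=0$.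
   Context: This is the Crow–Kimura quasispecies model with the single peaked fitness landscape; $\mathbf{p}^{(N)}(\mu)$ is the normalized Perron eigenvector of $\mathbf{M}+\mu\mathbf{Q}_N$ and $\overline{m}$ its dominant eigenvalue. *)

theory Defs
  imports Complex_Main
begin

definition mvec :: "nat \<Rightarrow> nat \<Rightarrow> real" where
  "mvec N i = (if i = 0 then real N else 0)"

definition Qmat :: "nat \<Rightarrow> nat \<Rightarrow> nat \<Rightarrow> real" where
  "Qmat N i j =
     (if i = j then - real N
      else if i = j + 1 then real N - real j
      else if j = i + 1 then real j
      else 0)"

definition mbar :: "nat \<Rightarrow> (nat \<Rightarrow> real) \<Rightarrow> real" where
  "mbar N p = (\<Sum>i\<le>N. mvec N i * p i)"

definition qs_vector :: "nat \<Rightarrow> real \<Rightarrow> (nat \<Rightarrow> real) \<Rightarrow> bool" where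
  "qs_vector N \<mu> p \<longleftrightarrow>
     (\<forall>i\<le>N. p i > 0) \<and> (\<Sum>i\<le>N. p i) = 1 \<and>
     (\<forall>i\<le>N. mvec N i * p i + \<mu> * (\<Sum>j\<le>N. Qmat N i j * p j) = mbar N p * p i)"

end

theory Submission imports Defs begin

text \<open>Row 0 of the eigenvalue equation reads \<open>\<mu> p(1) = N p(0) (p(0) - 1 + \<mu>)\<close>. Since
  \<open>0 < p(1) \<le> 1\<close>, this forces \<open>p(0) > 1 - \<mu>\<close> and \<open>N p(0) (p(0) - 1 + \<mu>) \<le> \<mu>\<close>, which
  squeezes \<open>p(0)\<close> to \<open>1 - \<mu>\<close> if \<open>\<mu> < 1\<close> and to \<open>0\<close> if \<open>\<mu> \<ge> 1\<close>; moreover \<open>m-bar = N p(0)\<close>.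
  Row \<open>a\<close> reads \<open>(p(0) + \<mu>) p(a) = \<mu> (1 - (a-1)/N) p(a-1) + \<mu> (a+1)/N p(a+1)\<close>, whose last term
  is \<open>O(1/N)\<close>; so for \<open>\<mu> < 1\<close> induction on \<open>a\<close> gives \<open>lim p(a) = \<mu> lim p(a-1)\<close>.\<close>

lemma mbar_eq: "mbar N p = real N * p 0"
proof -
  have "\<And>i. mvec N i * p i = (if i = 0 then real N * p 0 else 0)"
    by (simp add: mvec_def)
  then show ?thesis
    unfolding mbar_def by (simp add: sum.delta)
qed

lemma sum_Qmat_row:
  assumes "i \<le> N"
  shows "(\<Sum>j\<le>N. Qmat N i j * f j) = - real N * f i
           + (if 1 \<le> i then (real N - real (i - 1)) * f (i - 1) else 0)
           + (if i + 1 \<le> N then real (i + 1) * f (i + 1) else 0)"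
proof -
  have split: "\<And>j. Qmat N i j * f j = (if j = i then - real N * f i else 0)
      + (if j + 1 = i then (real N - real j) * f j else 0)
      + (if j = i + 1 then real j * f j else 0)"
    by (auto simp: Qmat_def)
  have lower: "(\<Sum>j\<le>N. if j + 1 = i then (real N - real j) * f j else 0)
      = (if 1 \<le> i then (real N - real (i - 1)) * f (i - 1) else 0)"
    using assms by (cases i) (simp_all add: sum.delta')
  show ?thesis
    unfolding split sum.distrib lower using assms by (simp add: sum.delta')
qed

lemma qs_vector_pos:
  assumes "qs_vector N \<mu> p" "i \<le> N"
  shows "0 < p i"
  using assms by (auto simp: qs_vector_def)

lemma qs_vector_le_1:
  assumes "qs_vector N \<mu> p" "i \<le> N"
  shows "p i \<le> 1"
proof -
  have "p i \<le> (\<Sum>j\<le>N. p j)"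
    using assms by (intro member_le_sum) (auto simp: qs_vector_def less_imp_le)
  then show ?thesis
    using assms(1) by (simp add: qs_vector_def)
qed

lemma qs_vector_row_eq:
  assumes "qs_vector N \<mu> p" "i \<le> N"
  shows "mvec N i * p i + \<mu> * (\<Sum>j\<le>N. Qmat N i j * p j) = real N * p 0 * p i"
  using assms by (auto simp: qs_vector_def mbar_eq)

lemma qs_vector_row_0:
  assumes "qs_vector N \<mu> p" "N \<ge> 1"
  shows "\<mu> * p 1 = real N * p 0 * (p 0 - 1 + \<mu>)"
proof -
  have "real N * p 0 + \<mu> * (- real N * p 0 + p 1) = real N * p 0 * p 0"
    using qs_vector_row_eq[OF assms(1), of 0] assms(2) by (simp add: sum_Qmat_row mvec_def)
  then show ?thesis
    by (simp add: algebra_simps)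
qed

lemma qs_vector_row_recursion:
  assumes "qs_vector N \<mu> p" "\<mu> > 0" "1 \<le> i" "i + 1 \<le> N"
  shows "p i = (\<mu> * (1 - real (i - 1) / real N) * p (i - 1)
                + \<mu> * (real (i + 1) / real N * p (i + 1))) / (p 0 + \<mu>)"
proof -
  have N: "real N > 0"
    using assms(4) by simp
  have "\<mu> * (- real N * p i + (real N - real (i - 1)) * p (i - 1) + real (i + 1) * p (i + 1))
        = real N * p 0 * p i"
    using qs_vector_row_eq[OF assms(1), of i] assms(3,4) by (simp add: sum_Qmat_row mvec_def)
  then have "p i * (p 0 + \<mu>) * real N
        = \<mu> * (real N - real (i - 1)) * p (i - 1) + \<mu> * real (i + 1) * p (i + 1)"
    by (simp add: algebra_simps)
  then have "p i * (p 0 + \<mu>)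
        = (\<mu> * (real N - real (i - 1)) * p (i - 1) + \<mu> * real (i + 1) * p (i + 1)) / real N"
    using N by (simp add: eq_divide_eq)
  also have "\<dots> = \<mu> * (1 - real (i - 1) / real N) * p (i - 1)
                  + \<mu> * (real (i + 1) / real N * p (i + 1))"
    using N by (simp add: field_simps)
  finally show ?thesis
    using assms(2) qs_vector_pos[OF assms(1), of 0] by (simp add: eq_divide_eq)
qed

lemma qs_vector_p0_bounds:
  assumes "qs_vector N \<mu> p" "\<mu> > 0" "N \<ge> 1"
  shows "1 - \<mu> < p 0" "real N * p 0 * (p 0 - 1 + \<mu>) \<le> \<mu>"
proof -
  have row: "\<mu> * p 1 = real N * p 0 * (p 0 - 1 + \<mu>)"
    using qs_vector_row_0[OF assms(1,3)] .
  have p1: "0 < p 1" "p 1 \<le> 1"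
    using qs_vector_pos[OF assms(1)] qs_vector_le_1[OF assms(1)] assms(3) by auto
  have "0 < real N * p 0"
    using qs_vector_pos[OF assms(1), of 0] assms(3) by simp
  moreover have "0 < real N * p 0 * (p 0 - 1 + \<mu>)"
    using row p1 assms(2) by (metis mult_pos_pos)
  ultimately show "1 - \<mu> < p 0"
    using zero_less_mult_pos[of "real N * p 0" "p 0 - 1 + \<mu>"] by simp
  have "\<mu> * p 1 \<le> \<mu>"
    using p1 assms(2) by simp
  then show "real N * p 0 * (p 0 - 1 + \<mu>) \<le> \<mu>"
    using row by simp
qed

lemma qs_vector_p0_le_sqrt:
  assumes "qs_vector N \<mu> p" "\<mu> \<ge> 1" "N \<ge> 1"
  shows "p 0 \<le> sqrt (\<mu> / real N)"
proof (rule real_le_rsqrt)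
  have N: "real N > 0"
    using assms(3) by simp
  have "real N * (p 0)\<^sup>2 \<le> real N * p 0 * (p 0 - 1 + \<mu>)"
    using assms(2) N qs_vector_pos[OF assms(1), of 0]
    by (simp add: power2_eq_square mult_left_mono)
  also have "\<dots> \<le> \<mu>"
    using qs_vector_p0_bounds[OF assms(1) _ assms(3)] assms(2) by simp
  finally show "(p 0)\<^sup>2 \<le> \<mu> / real N"
    using N by (simp add: field_simps)
qed

lemma qs_vector_p0_le:
  assumes "qs_vector N \<mu> p" "0 < \<mu>" "\<mu> < 1" "N \<ge> 1"
  shows "p 0 \<le> (1 - \<mu>) + \<mu> / (1 - \<mu>) / real N"
proof -
  have N: "real N > 0"
    using assms(4) by simp
  note bounds = qs_vector_p0_bounds[OF assms(1,2,4)]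
  have "real N * (1 - \<mu>) * (p 0 - 1 + \<mu>) \<le> real N * p 0 * (p 0 - 1 + \<mu>)"
    using bounds(1) assms(3) N by (intro mult_right_mono mult_left_mono) auto
  with bounds(2) have "real N * (1 - \<mu>) * (p 0 - 1 + \<mu>) \<le> \<mu>"
    by linarith
  then show ?thesis
    using N assms(3) by (simp add: field_simps)
qed

lemma mbar_over_N_tendsto_iff:
  "(\<lambda>N. mbar N (p N) / real N) \<longlonglongrightarrow> L \<longleftrightarrow> (\<lambda>N. p N 0) \<longlonglongrightarrow> L"
proof (rule tendsto_cong)
  show "eventually (\<lambda>N. mbar N (p N) / real N = p N 0) sequentially"
    using eventually_ge_at_top[of 1] by eventually_elim (simp add: mbar_eq)
qed

context
  fixes \<mu> :: real and p :: "nat \<Rightarrow> nat \<Rightarrow> real"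
  assumes mu_pos: "\<mu> > 0"
    and qs: "\<And>N. N \<ge> 1 \<Longrightarrow> qs_vector N \<mu> (p N)"
begin

lemma eventually_qs_vector: "eventually (\<lambda>N. qs_vector N \<mu> (p N) \<and> N \<ge> n) sequentially"
  using eventually_ge_at_top[of "max 1 n"] by eventually_elim (simp add: qs)

lemma p0_tendsto_zero:
  assumes "\<mu> \<ge> 1"
  shows "(\<lambda>N. p N 0) \<longlonglongrightarrow> 0"
proof (rule tendsto_sandwich)
  show "eventually (\<lambda>N. 0 \<le> p N 0) sequentially"
    using eventually_qs_vector[of 0] by eventually_elim (simp add: qs_vector_pos less_imp_le)
  show "eventually (\<lambda>N. p N 0 \<le> sqrt (\<mu> / real N)) sequentially"
    using eventually_qs_vector[of 1] by eventually_elim (use assms qs_vector_p0_le_sqrt in blast)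
  show "(\<lambda>N. sqrt (\<mu> / real N)) \<longlonglongrightarrow> 0"
    using tendsto_real_sqrt[OF lim_const_over_n[of \<mu>]] by simp
qed simp

lemma p0_tendsto_one_minus:
  assumes "\<mu> < 1"
  shows "(\<lambda>N. p N 0) \<longlonglongrightarrow> 1 - \<mu>"
proof (rule tendsto_sandwich)
  show "eventually (\<lambda>N. 1 - \<mu> \<le> p N 0) sequentially"
    using eventually_qs_vector[of 1]
    by eventually_elim (use mu_pos qs_vector_p0_bounds(1) in fastforce)
  show "eventually (\<lambda>N. p N 0 \<le> (1 - \<mu>) + \<mu> / (1 - \<mu>) / real N) sequentially"
    using eventually_qs_vector[of 1]
    by eventually_elim (use assms mu_pos qs_vector_p0_le in blast)
  show "(\<lambda>N. (1 - \<mu>) + \<mu> / (1 - \<mu>) / real N) \<longlonglongrightarrow> 1 - \<mu>"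
    using tendsto_add[OF tendsto_const lim_const_over_n[of "\<mu> / (1 - \<mu>)"]] by simp
qed simp

lemma scaled_component_tendsto_zero: "(\<lambda>N. c / real N * p N i) \<longlonglongrightarrow> 0"
proof (rule tendsto_0_le[OF lim_const_over_n, where K = 1])
  show "eventually (\<lambda>N. norm (c / real N * p N i) \<le> norm (c / real N) * 1) sequentially"
    using eventually_qs_vector[of i]
  proof eventually_elim
    case (elim N)
    then have "\<bar>p N i\<bar> \<le> 1"
      using qs_vector_pos qs_vector_le_1 by force
    then show ?case
      by (simp add: abs_mult mult_left_le divide_right_mono)
  qed
qed

lemma component_tendsto:
  assumes "\<mu> < 1"
  shows "(\<lambda>N. p N a) \<longlonglongrightarrow> (1 - \<mu>) * \<mu> ^ a"
proof (induction a)
  case 0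
  then show ?case
    using p0_tendsto_one_minus[OF assms] by simp
next
  case (Suc a)
  define F where "F N = (\<mu> * (1 - real a / real N) * p N a
                         + \<mu> * (real (a + 2) / real N * p N (a + 2))) / (p N 0 + \<mu>)" for N
  have "F \<longlonglongrightarrow> (\<mu> * (1 - 0) * ((1 - \<mu>) * \<mu> ^ a) + \<mu> * 0) / ((1 - \<mu>) + \<mu>)"
    unfolding F_def
    by (intro tendsto_intros Suc.IH scaled_component_tendsto_zero
          p0_tendsto_one_minus[OF assms]) simp
  then have "F \<longlonglongrightarrow> (1 - \<mu>) * \<mu> ^ Suc a"
    by (simp add: algebra_simps)
  moreover have "eventually (\<lambda>N. F N = p N (Suc a)) sequentially"
    using eventually_qs_vector[of "a + 2"]
    by eventually_elim (use mu_pos qs_vector_row_recursion[of _ \<mu> _ "Suc a"] in \<open>simp add: F_def\<close>)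
  ultimately show ?case
    by (rule Lim_transform_eventually)
qed

end

theorem proposition4:
  fixes \<mu> :: real and p :: "nat \<Rightarrow> nat \<Rightarrow> real"
  assumes "\<mu> > 0"
    and "\<And>N. N \<ge> 1 \<Longrightarrow> qs_vector N \<mu> (p N)"
  shows "(\<mu> < 1 \<longrightarrow>
            (\<lambda>N. p N 0) \<longlonglongrightarrow> 1 - \<mu> \<and>
            (\<lambda>N. mbar N (p N) / real N) \<longlonglongrightarrow> 1 - \<mu> \<and>
            (\<forall>a::nat. a \<ge> 1 \<longrightarrow> (\<lambda>N. p N a) \<longlonglongrightarrow> (1 - \<mu>) * \<mu> ^ a))
       \<and> (\<mu> \<ge> 1 \<longrightarrow>
            (\<lambda>N. mbar N (p N) / real N) \<longlonglongrightarrow> 0 \<and>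
            (\<lambda>N. p N 0) \<longlonglongrightarrow> 0)"
  using p0_tendsto_one_minus[OF assms] component_tendsto[OF assms]
    p0_tendsto_zero[OF assms] mbar_over_N_tendsto_iff
  by blast

end
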